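(* Let $p$ and $r$ be states. Then $r$ is an extreme point of the convex set $p^{TP}=\{Tp: T\in TP(d)\}$ if and only if $\beta(r)$ is tightly thermomajorized by $\beta(p)$.
   Context: Fix an integer $d\ge 2$, an inverse temperature $\beta\in(0,\infty)$ and pairwise distinct real numbers $E_0=0,E_1,\dots,E_{d-1}$. Put $q_{m,n}=e^{-\beta(E_m-E_n)}$, $Z=\sum_j q_{j,0}$, and $g_i=q_{i,0}/Z$ (Gibbs vector). A state is a probability vector $p\in\mathbb{R}^d$. $TP(d)$ is the set of $d\times d$ real matrices with non-negative entries, columns summing to $1$, and $Tg=g$. Thermomajorization curve: for a state $p$ choose a permutation $\pi$ of $\{0,\dots,d-1\}$ with $p_{\pi(0)}/g_{\pi(0)}\ge p_{\pi(1)}/g_{\pi(1)}\ge\dots\ge p_{\pi(d-1)}/g_{\pi(d-1)}$ (the tuple $(\pi(0),\dots,\pi(d-1))$ is called a $\beta$-order of $p$). Let $x_k=\sum_{i\le k}g_{\pi(i)}$, $y_k=\sum_{i\le k}p_{\pi(i)}$. The curve $\beta(p)$ is the graph of the concave piecewise-linear function on $[0,1]$ through $(0,0),(x_0,y_0),\dots,(x_{d-1},y_{d-1})=(1,1)$ (it does not depend on the choice of $\beta$-order); its slopes are the numbers $p_i/g_i$. The elbows of $\beta(p)$ are the points $(x_k,y_k)$, $k=0,\dots,d-2$. $\beta(p)$ tightly thermomajorizes $\beta(r)$ (equivalently $\beta(r)$ is tightly thermomajorized by $\beta(p)$) if every elbow $(x,y)$ of $\beta(r)$ lies on $\beta(p)$,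 i.e. $y=\beta(p)(x)$ where $\beta(p)(\cdot)$ denotes the function whose graph is the curve. *)

theory Defs
  imports "HOL-Analysis.Analysis"
begin

text \<open>Vectors of length d are modelled as functions nat \<Rightarrow> real, indices 0..d-1;
  d x d matrices as nat \<Rightarrow> nat \<Rightarrow> real (entry T i j = row i, column j).\<close>

definition qfac :: "real \<Rightarrow> (nat \<Rightarrow> real) \<Rightarrow> nat \<Rightarrow> nat \<Rightarrow> real" where
  "qfac \<beta> E m n = exp (- \<beta> * (E m - E n))"

definition partfun :: "nat \<Rightarrow> real \<Rightarrow> (nat \<Rightarrow> real) \<Rightarrow> real" where
  "partfun d \<beta> E = (\<Sum>j<d. qfac \<beta> E j 0)"

definition gibbs :: "nat \<Rightarrow> real \<Rightarrow> (nat \<Rightarrow> real) \<Rightarrow> nat \<Rightarrow> real" where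
  "gibbs d \<beta> E i = (if i < d then qfac \<beta> E i 0 / partfun d \<beta> E else 0)"

definition is_state :: "nat \<Rightarrow> (nat \<Rightarrow> real) \<Rightarrow> bool" where
  "is_state d p \<longleftrightarrow> (\<forall>i<d. 0 \<le> p i) \<and> (\<Sum>i<d. p i) = 1 \<and> (\<forall>i\<ge>d. p i = 0)"

definition TP :: "nat \<Rightarrow> (nat \<Rightarrow> real) \<Rightarrow> (nat \<Rightarrow> nat \<Rightarrow> real) set" where
  "TP d g = {T. (\<forall>i<d. \<forall>j<d. 0 \<le> T i j)
              \<and> (\<forall>j<d. (\<Sum>i<d. T i j) = 1)
              \<and> (\<forall>i<d. (\<Sum>j<d. T i j * g j) = g i)}"

definition mat_app :: "nat \<Rightarrow> (nat \<Rightarrow> nat \<Rightarrow> real) \<Rightarrow> (nat \<Rightarrow> real) \<Rightarrow> nat \<Rightarrow> real" where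
  "mat_app d T p = (\<lambda>i. if i < d then (\<Sum>j<d. T i j * p j) else 0)"

definition TP_orbit :: "nat \<Rightarrow> (nat \<Rightarrow> real) \<Rightarrow> (nat \<Rightarrow> real) \<Rightarrow> (nat \<Rightarrow> real) set" where
  "TP_orbit d g p = {mat_app d T p | T. T \<in> TP d g}"

definition is_extreme_point :: "(nat \<Rightarrow> real) \<Rightarrow> (nat \<Rightarrow> real) set \<Rightarrow> bool" where
  "is_extreme_point x S \<longleftrightarrow> x \<in> S \<and>
     \<not> (\<exists>a\<in>S. \<exists>b\<in>S. a \<noteq> b \<and> (\<exists>u::real. 0 < u \<and> u < 1 \<and> x = (\<lambda>i. (1 - u) * a i + u * b i)))"

definition beta_order :: "nat \<Rightarrow> (nat \<Rightarrow> real) \<Rightarrow> (nat \<Rightarrow> real) \<Rightarrow> (nat \<Rightarrow> nat) \<Rightarrow> bool" where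
  "beta_order d g p \<pi> \<longleftrightarrow> bij_betw \<pi> {..<d} {..<d} \<and>
     (\<forall>k. Suc k < d \<longrightarrow> p (\<pi> (Suc k)) / g (\<pi> (Suc k)) \<le> p (\<pi> k) / g (\<pi> k))"

definition elbow_x :: "(nat \<Rightarrow> real) \<Rightarrow> (nat \<Rightarrow> nat) \<Rightarrow> nat \<Rightarrow> real" where
  "elbow_x g \<pi> k = (\<Sum>i\<le>k. g (\<pi> i))"

definition elbow_y :: "(nat \<Rightarrow> real) \<Rightarrow> (nat \<Rightarrow> nat) \<Rightarrow> nat \<Rightarrow> real" where
  "elbow_y p \<pi> k = (\<Sum>i\<le>k. p (\<pi> i))"

text \<open>The function beta(p)(.) on [0,1]: piecewise-linear interpolation of the points
  (0,0), (x_0,y_0), ..., (x_{d-1},y_{d-1}) for a chosen beta-order of p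
  (the paper notes it does not depend on the choice).  Here X k = sum_{i<k} g_(pi i),
  so X 0 = 0 and X (Suc k) = x_k; on [X k, X (k+1)] the function interpolates linearly.\<close>
definition beta_curve :: "nat \<Rightarrow> (nat \<Rightarrow> real) \<Rightarrow> (nat \<Rightarrow> real) \<Rightarrow> real \<Rightarrow> real" where
  "beta_curve d g p x =
     (let \<pi> = (SOME \<pi>. beta_order d g p \<pi>);
          X = (\<lambda>k. \<Sum>i<k. g (\<pi> i));
          Y = (\<lambda>k. \<Sum>i<k. p (\<pi> i));
          k = (LEAST k. x \<le> X (Suc k))
      in Y k + (x - X k) * (Y (Suc k) - Y k) / (X (Suc k) - X k))"

definition tightly_thermomajorizes ::
  "nat \<Rightarrow> (nat \<Rightarrow> real) \<Rightarrow> (nat \<Rightarrow> real) \<Rightarrow> (nat \<Rightarrow> real) \<Rightarrow> bool" where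
  "tightly_thermomajorizes d g p r \<longleftrightarrow>
     (\<forall>\<pi>. beta_order d g r \<pi> \<longrightarrow>
        (\<forall>k. k + 2 \<le> d \<longrightarrow> elbow_y r \<pi> k = beta_curve d g p (elbow_x g \<pi> k)))"

end

(*
  Write C for the curve of p and call x thermomajorized if it vanishes outside {0..d-1}, has total
  mass 1 and satisfies x(S) <= C(g(S)) for every index set S.  Each T p is thermomajorized: the rows
  of T in S give weights w in [0,1] with sum w g = g(S), and sum w p <= C(sum w g) is the fractional
  knapsack bound, C being the minimum of its tangent lines.  Conversely, if the prefix sums of x along
  some order sigma lie on C, then x = T p for the matrix T that transports the layout of [0,1] into
  intervals of lengths g in the order sigma onto the layout along a beta-order of p.

  The tight sets, those with x(S) = C(g(S)), are closed under union and intersection since C is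
  concave, and a tight set stays tight when an element is exchanged for one of no smaller ratio x_i/g_i.
  Hence if tight sets separate all pairs of indices, every prefix of a beta-order of x is tight.
  Otherwise mass can be moved both ways between two unseparated indices, writing x as a proper convex
  combination of thermomajorized points with more tight sets.  By induction on the number of non-tight
  sets the orbit is exactly the set of thermomajorized points.  Its extreme points are then the points
  whose beta-order prefixes are tight, since a convex combination is tight only where both parts are.
*)
theory Submission
  imports Defs
begin

lemma beta_order_exists: "\<exists>\<pi>. beta_order d g v \<pi>"
proof -
  define xs where "xs = sort_key (\<lambda>i. - (v i / g i)) [0..<d]"
  have xs: "distinct xs" "set xs = {..<d}" "length xs = d" by (auto simp: xs_def)
  have sorted: "sorted (map (\<lambda>i. - (v i / g i)) xs)" by (simp add: xs_def)
  have "bij_betw ((!) xs) {..<d} {..<d}"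
    using bij_betw_nth[OF xs(1)] xs by auto
  moreover have "v (xs ! Suc k) / g (xs ! Suc k) \<le> v (xs ! k) / g (xs ! k)" if "Suc k < d" for k
    using sorted_nth_mono[OF sorted, of k "Suc k"] that xs by auto
  ultimately show ?thesis unfolding beta_order_def by blast
qed

lemma beta_order_bij: "beta_order d g v \<pi> \<Longrightarrow> bij_betw \<pi> {..<d} {..<d}"
  by (simp add: beta_order_def)

lemma beta_order_ratio_antimono:
  assumes "beta_order d g v \<pi>" "a \<le> b" "b < d"
  shows "v (\<pi> b) / g (\<pi> b) \<le> v (\<pi> a) / g (\<pi> a)"
  using assms(2,3)
proof (induction b rule: dec_induct)
  case (step n)
  then have "v (\<pi> (Suc n)) / g (\<pi> (Suc n)) \<le> v (\<pi> n) / g (\<pi> n)"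
    using assms(1) unfolding beta_order_def by blast
  with step show ?case by simp
qed simp

lemma bij_betw_prefix_subset:
  fixes d :: nat
  shows "bij_betw \<sigma> {..<d} {..<d} \<Longrightarrow> m \<le> d \<Longrightarrow> \<sigma> ` {..<m} \<subseteq> {..<d}"
  using bij_betwE by fastforce

lemma sum_bij_betw_prefix:
  fixes d :: nat
  assumes "bij_betw \<sigma> {..<d} {..<d}" "m \<le> d"
  shows "sum v (\<sigma> ` {..<m}) = (\<Sum>i<m. v (\<sigma> i))"
proof -
  have "inj_on \<sigma> {..<m}"
    using assms unfolding bij_betw_def by (auto intro: inj_on_subset)
  then show ?thesis by (simp add: sum.reindex)
qed

lemma eq_if_prefix_sums_eq:
  fixes d :: nat and a b :: "nat \<Rightarrow> real"
  assumes \<sigma>: "bij_betw \<sigma> {..<d} {..<d}"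
    and out: "\<And>i. d \<le> i \<Longrightarrow> a i = 0" "\<And>i. d \<le> i \<Longrightarrow> b i = 0"
    and prefix: "\<And>m. m \<le> d \<Longrightarrow> (\<Sum>i<m. a (\<sigma> i)) = (\<Sum>i<m. b (\<sigma> i))"
  shows "a = b"
proof
  fix l
  show "a l = b l"
  proof (cases "l < d")
    case True
    then obtain m :: nat where m: "m < d" "l = \<sigma> m"
      using \<sigma> unfolding bij_betw_def by auto
    with prefix[of m] prefix[of "Suc m"] show ?thesis by simp
  qed (use out in simp)
qed

lemma sum_lessThan_split:
  fixes k d :: nat
  shows "k \<le> d \<Longrightarrow> (\<Sum>i<d. f i) = (\<Sum>i<k. f i) + (\<Sum>i\<in>{k..<d}. f i)"
  using sum.atLeastLessThan_concat[of 0 k d f] by (simp add: atLeast0LessThan)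

lemma sum_convex_comb:
  fixes a b v :: "'a \<Rightarrow> real"
  shows "(\<Sum>j\<in>A. ((1 - u) * a j + u * b j) * v j)
     = (1 - u) * (\<Sum>j\<in>A. a j * v j) + u * (\<Sum>j\<in>A. b j * v j)"
proof -
  have "(\<Sum>j\<in>A. ((1 - u) * a j + u * b j) * v j) = (\<Sum>j\<in>A. (1 - u) * (a j * v j) + u * (b j * v j))"
    by (rule sum.cong) (simp_all add: algebra_simps)
  then show ?thesis by (simp add: sum.distrib sum_distrib_left)
qed

lemma TP_convex_comb:
  assumes T1: "T1 \<in> TP d g" and T2: "T2 \<in> TP d g" and u: "0 \<le> u" "u \<le> 1"
  shows "(\<lambda>i j. (1 - u) * T1 i j + u * T2 i j) \<in> TP d g"
  unfolding TP_def
proof (intro CollectI conjI allI impI)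
  fix i j :: nat assume "i < d" "j < d"
  then show "0 \<le> (1 - u) * T1 i j + u * T2 i j" using T1 T2 u unfolding TP_def by simp
next
  fix j assume "j < d"
  moreover have "(\<Sum>i<d. (1 - u) * T1 i j + u * T2 i j) = (1 - u) * (\<Sum>i<d. T1 i j) + u * (\<Sum>i<d. T2 i j)"
    by (simp add: sum.distrib sum_distrib_left)
  ultimately show "(\<Sum>i<d. (1 - u) * T1 i j + u * T2 i j) = 1" using T1 T2 unfolding TP_def by simp
next
  fix i assume "i < d"
  then show "(\<Sum>j<d. ((1 - u) * T1 i j + u * T2 i j) * g j) = g i"
    using T1 T2 unfolding TP_def sum_convex_comb by (simp add: algebra_simps)
qed

lemma TP_orbit_convex:
  assumes "a \<in> TP_orbit d g p" "b \<in> TP_orbit d g p" "0 \<le> u" "u \<le> 1"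
  shows "(\<lambda>i. (1 - u) * a i + u * b i) \<in> TP_orbit d g p"
proof -
  obtain T1 T2 where T: "T1 \<in> TP d g" "a = mat_app d T1 p" "T2 \<in> TP d g" "b = mat_app d T2 p"
    using assms unfolding TP_orbit_def by blast
  let ?T = "\<lambda>i j. (1 - u) * T1 i j + u * T2 i j"
  have "mat_app d ?T p = (\<lambda>i. (1 - u) * a i + u * b i)"
    by (auto simp: T(2,4) mat_app_def sum_convex_comb)
  with TP_convex_comb[OF T(1,3) assms(3,4)] show ?thesis
    unfolding TP_orbit_def by (intro CollectI exI[of _ ?T]) simp
qed

section \<open>The thermomajorization curve\<close>

locale thermo_curve =
  fixes d :: nat and g p :: "nat \<Rightarrow> real"
  assumes d_pos: "0 < d"
    and g_pos: "\<And>i. i < d \<Longrightarrow> 0 < g i"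
    and g_sum: "(\<Sum>i<d. g i) = 1"
    and p_sum: "(\<Sum>i<d. p i) = 1"
begin

lemma sum_g_mono: "A \<subseteq> B \<Longrightarrow> B \<subseteq> {..<d} \<Longrightarrow> sum g A \<le> sum g B"
  using g_pos by (intro sum_mono2) (auto intro: finite_subset simp: less_imp_le)

lemma sum_g_bounds: "S \<subseteq> {..<d} \<Longrightarrow> 0 \<le> sum g S \<and> sum g S \<le> 1"
  using sum_g_mono[of "{}" S] sum_g_mono[of S "{..<d}"] g_sum by simp

lemma prefix_sum_g_bounds:
  assumes "bij_betw \<sigma> {..<d} {..<d}" "m \<le> n" "n \<le> d"
  shows "0 \<le> (\<Sum>i<m. g (\<sigma> i)) \<and> (\<Sum>i<m. g (\<sigma> i)) \<le> (\<Sum>i<n. g (\<sigma> i))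
    \<and> (\<Sum>i<n. g (\<sigma> i)) \<le> 1"
proof -
  have "\<sigma> ` {..<m} \<subseteq> \<sigma> ` {..<n}" "\<sigma> ` {..<n} \<subseteq> {..<d}"
    using assms bij_betw_prefix_subset by (auto simp: image_mono)
  then show ?thesis
    using sum_g_bounds[of "\<sigma> ` {..<m}"] sum_g_bounds[of "\<sigma> ` {..<n}"]
      sum_g_mono[of "\<sigma> ` {..<m}" "\<sigma> ` {..<n}"] assms
      sum_bij_betw_prefix[OF assms(1), of m g] sum_bij_betw_prefix[OF assms(1), of n g]
    by auto
qed

definition "\<pi>\<^sub>p = (SOME \<pi>. beta_order d g p \<pi>)"
definition "X k = (\<Sum>i<k. g (\<pi>\<^sub>p i))"
definition "Y k = (\<Sum>i<k. p (\<pi>\<^sub>p i))"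
definition "slope k = p (\<pi>\<^sub>p k) / g (\<pi>\<^sub>p k)"
definition "tangent k x = Y k + slope k * (x - X k)"
abbreviation "curve \<equiv> beta_curve d g p"

lemma beta_order_\<pi>\<^sub>p: "beta_order d g p \<pi>\<^sub>p"
  unfolding \<pi>\<^sub>p_def using beta_order_exists by (metis someI_ex)

lemma bij_\<pi>\<^sub>p: "bij_betw \<pi>\<^sub>p {..<d} {..<d}"
  using beta_order_bij[OF beta_order_\<pi>\<^sub>p] .

lemma g_\<pi>\<^sub>p_pos: "k < d \<Longrightarrow> 0 < g (\<pi>\<^sub>p k)"
  using g_pos bij_\<pi>\<^sub>p bij_betwE by blast

lemma X_0 [simp]: "X 0 = 0" and Y_0 [simp]: "Y 0 = 0"
  by (simp_all add: X_def Y_def)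

lemma X_Suc: "X (Suc k) = X k + g (\<pi>\<^sub>p k)" and Y_Suc: "Y (Suc k) = Y k + p (\<pi>\<^sub>p k)"
  by (simp_all add: X_def Y_def)

lemma X_d: "X d = 1" and Y_d: "Y d = 1"
  using sum.reindex_bij_betw[OF bij_\<pi>\<^sub>p, of g] sum.reindex_bij_betw[OF bij_\<pi>\<^sub>p, of p] g_sum p_sum
  by (simp_all add: X_def Y_def)

lemma X_mono: "m \<le> n \<Longrightarrow> n \<le> d \<Longrightarrow> X m \<le> X n"
  using prefix_sum_g_bounds[OF bij_\<pi>\<^sub>p] by (simp add: X_def)

lemma X_bounds: "k \<le> d \<Longrightarrow> 0 \<le> X k \<and> X k \<le> 1"
  using prefix_sum_g_bounds[OF bij_\<pi>\<^sub>p, of k k] by (simp add: X_def)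

lemma X_strict_mono: "m < n \<Longrightarrow> n \<le> d \<Longrightarrow> X m < X n"
  using X_mono[of "Suc m" n] g_\<pi>\<^sub>p_pos[of m] by (simp add: X_Suc)

lemma p_\<pi>\<^sub>p: "k < d \<Longrightarrow> p (\<pi>\<^sub>p k) = slope k * g (\<pi>\<^sub>p k)"
  using g_\<pi>\<^sub>p_pos[of k] by (simp add: slope_def)

lemma slope_antimono: "j \<le> i \<Longrightarrow> i < d \<Longrightarrow> slope i \<le> slope j"
  using beta_order_ratio_antimono[OF beta_order_\<pi>\<^sub>p] by (simp add: slope_def)

lemma Y_le_tangent_right: "j \<le> m \<Longrightarrow> m \<le> d \<Longrightarrow> Y m \<le> tangent j (X m)"
proof (induction m rule: dec_induct)
  case (step n)
  have "p (\<pi>\<^sub>p n) \<le> slope j * g (\<pi>\<^sub>p n)"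
    using p_\<pi>\<^sub>p[of n] slope_antimono[of j n] g_\<pi>\<^sub>p_pos[of n] step by (simp add: mult_right_mono)
  with step show ?case by (simp add: tangent_def X_Suc Y_Suc algebra_simps)
qed (simp add: tangent_def)

lemma Y_le_tangent_left: "m \<le> j \<Longrightarrow> j < d \<Longrightarrow> Y m \<le> tangent j (X m)"
proof (induction j rule: dec_induct)
  case (step n)
  have "slope (Suc n) * g (\<pi>\<^sub>p n) \<le> p (\<pi>\<^sub>p n)"
    using p_\<pi>\<^sub>p[of n] slope_antimono[of n "Suc n"] g_\<pi>\<^sub>p_pos[of n] step by (simp add: mult_right_mono)
  moreover have "slope (Suc n) * (X n - X m) \<le> slope n * (X n - X m)"
    using slope_antimono[of n "Suc n"] step X_mono[of m n] by (simp add: mult_right_mono)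
  ultimately show ?case using step by (simp add: tangent_def X_Suc Y_Suc algebra_simps)
qed (simp add: tangent_def)

lemma Y_le_tangent: "j < d \<Longrightarrow> m \<le> d \<Longrightarrow> Y m \<le> tangent j (X m)"
  using Y_le_tangent_right[of j m] Y_le_tangent_left[of m j] by (cases "j \<le> m") auto

lemma tangent_X: "tangent k (X k) = Y k"
  by (simp add: tangent_def)

lemma tangent_X_Suc: "k < d \<Longrightarrow> tangent k (X (Suc k)) = Y (Suc k)"
  using p_\<pi>\<^sub>p[of k] by (simp add: tangent_def X_Suc Y_Suc)

lemma tangent_min_on_segment:
  assumes k: "k < d" and x: "X k \<le> x" "x \<le> X (Suc k)" and j: "j < d"
  shows "tangent k x \<le> tangent j x"
proof -
  define t where "t = (x - X k) / (X (Suc k) - X k)"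
  have pos: "X k < X (Suc k)" using X_strict_mono[of k "Suc k"] k by simp
  then have "t * (X (Suc k) - X k) = x - X k" by (simp add: t_def)
  then have x_eq: "x = (1 - t) * X k + t * X (Suc k)" by (simp add: algebra_simps)
  have t: "0 \<le> t" "t \<le> 1" using pos x by (auto simp: t_def field_simps)
  have affine: "tangent i x = (1 - t) * tangent i (X k) + t * tangent i (X (Suc k))" for i
    unfolding tangent_def x_eq by (simp add: algebra_simps)
  have "tangent k (X k) \<le> tangent j (X k)" "tangent k (X (Suc k)) \<le> tangent j (X (Suc k))"
    using tangent_X[of k] tangent_X_Suc[OF k] Y_le_tangent[OF j, of k] Y_le_tangent[OF j, of "Suc k"] k
    by simp_all
  then show ?thesis unfolding affine[of k] affine[of j] using t
    by (simp add: add_mono mult_left_mono)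
qed

lemma curve_on_some_segment:
  assumes x: "0 \<le> x" "x \<le> 1"
  shows "\<exists>k<d. X k \<le> x \<and> x \<le> X (Suc k) \<and> curve x = tangent k x"
proof -
  define k where "k = (LEAST k. x \<le> X (Suc k))"
  have ex: "x \<le> X (Suc (d - 1))" using X_d x d_pos by simp
  have upper: "x \<le> X (Suc k)" unfolding k_def by (rule LeastI, rule ex)
  have kd: "k < d" using Least_le[of "\<lambda>k. x \<le> X (Suc k)", OF ex] d_pos by (simp add: k_def)
  have lower: "X k \<le> x"
  proof (cases k)
    case (Suc k')
    then have "\<not> x \<le> X (Suc k')" using not_less_Least[of k' "\<lambda>k. x \<le> X (Suc k)"] k_def by simp
    with Suc show ?thesis by simp
  qed (use x in simp)
  have "curve x = tangent k x"
    unfolding beta_curve_def Let_def tangent_def slope_def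
    apply (fold \<pi>\<^sub>p_def)
    apply (fold X_def Y_def)
    apply (fold k_def)
    using g_\<pi>\<^sub>p_pos[OF kd] by (simp add: X_Suc Y_Suc)
  with upper lower kd show ?thesis by blast
qed

lemma curve_le_tangent: "0 \<le> x \<Longrightarrow> x \<le> 1 \<Longrightarrow> j < d \<Longrightarrow> curve x \<le> tangent j x"
  using curve_on_some_segment tangent_min_on_segment by metis

lemma curve_on_segment:
  assumes k: "k < d" "X k \<le> x" "x \<le> X (Suc k)"
  shows "curve x = tangent k x"
proof -
  have x: "0 \<le> x" "x \<le> 1" using k X_bounds[of k] X_bounds[of "Suc k"] by auto
  obtain j where "j < d" "curve x = tangent j x" using curve_on_some_segment[OF x] by blast
  with curve_le_tangent[OF x k(1)] tangent_min_on_segment[OF k \<open>j < d\<close>] show ?thesis by linarith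
qed

lemma curve_X: "m \<le> d \<Longrightarrow> curve (X m) = Y m"
proof (cases "m < d")
  case True
  then show ?thesis using curve_on_segment[of m "X m"] X_mono[of m "Suc m"] tangent_X by simp
next
  case False
  moreover assume "m \<le> d"
  ultimately show ?thesis
    using curve_on_segment[of "d - 1" "X d"] X_mono[of "d - 1" d] tangent_X_Suc[of "d - 1"] d_pos
    by simp
qed

lemma curve_0: "curve 0 = 0"
  using curve_X[of 0] by simp

lemma curve_1: "curve 1 = 1"
  using curve_X[of d] X_d Y_d by simp

lemma curve_concave:
  assumes "0 \<le> u" "u \<le> v" "v \<le> w" "w \<le> 1"
  shows "(w - v) * curve u + (v - u) * curve w \<le> (w - u) * curve v"
proof -
  obtain k where k: "k < d" "curve v = tangent k v" using curve_on_some_segment[of v] assms by auto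
  have "curve u \<le> tangent k u" "curve w \<le> tangent k w" using curve_le_tangent k assms by auto
  then have "(w - v) * curve u + (v - u) * curve w \<le> (w - v) * tangent k u + (v - u) * tangent k w"
    using assms by (simp add: add_mono mult_left_mono)
  also have "\<dots> = (w - u) * tangent k v" by (simp add: tangent_def algebra_simps)
  finally show ?thesis using k by simp
qed

lemma curve_supergradient:
  assumes "0 \<le> a" "a < v" "v < c" "c \<le> 1" "0 \<le> t" "t \<le> 1"
    and left: "curve v - curve a \<le> s * (v - a)" and right: "s * (c - v) \<le> curve c - curve v"
  shows "curve t \<le> curve v + s * (t - v)"
proof (cases "v \<le> t")
  case True
  have "(t - v) * (curve v - s * (v - a)) \<le> (t - v) * curve a"
    using left True by (intro mult_left_mono) auto
  with curve_concave[of a v t] assms True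
  have "(v - a) * curve t \<le> (v - a) * (curve v + s * (t - v))"
    by (simp add: algebra_simps)
  with assms show ?thesis by simp
next
  case False
  have "(v - t) * (curve v + s * (c - v)) \<le> (v - t) * curve c"
    using right False by (intro mult_left_mono) auto
  with curve_concave[of t v c] assms False
  have "(c - v) * curve t \<le> (c - v) * (curve v + s * (t - v))"
    by (simp add: algebra_simps)
  with assms show ?thesis by simp
qed

lemma sum_excess_over_slope:
  assumes k: "k < d"
  shows "(\<Sum>l<d. max (p l - slope k * g l) 0) = Y k - slope k * X k"
proof -
  have excess: "max (p (\<pi>\<^sub>p i) - slope k * g (\<pi>\<^sub>p i)) 0
      = (if i < k then p (\<pi>\<^sub>p i) - slope k * g (\<pi>\<^sub>p i) else 0)" if i: "i < d" for i
  proof (cases "i < k")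
    case True
    then have "slope k * g (\<pi>\<^sub>p i) \<le> p (\<pi>\<^sub>p i)"
      using p_\<pi>\<^sub>p[OF i] g_\<pi>\<^sub>p_pos[OF i] slope_antimono[of i k] k by (simp add: mult_right_mono)
    with True show ?thesis by simp
  next
    case False
    then have "p (\<pi>\<^sub>p i) \<le> slope k * g (\<pi>\<^sub>p i)"
      using p_\<pi>\<^sub>p[OF i] g_\<pi>\<^sub>p_pos[OF i] slope_antimono[of k i] i by (simp add: mult_right_mono)
    with False show ?thesis by simp
  qed
  have "(\<Sum>l<d. max (p l - slope k * g l) 0) = (\<Sum>i<d. max (p (\<pi>\<^sub>p i) - slope k * g (\<pi>\<^sub>p i)) 0)"
    using sum.reindex_bij_betw[OF bij_\<pi>\<^sub>p, of "\<lambda>l. max (p l - slope k * g l) 0"] by simp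
  also have "\<dots> = (\<Sum>i<d. if i \<in> {..<k} then p (\<pi>\<^sub>p i) - slope k * g (\<pi>\<^sub>p i) else 0)"
    using excess by simp
  also have "\<dots> = (\<Sum>i\<in>{..<d} \<inter> {..<k}. p (\<pi>\<^sub>p i) - slope k * g (\<pi>\<^sub>p i))"
    by (rule sum.inter_restrict[symmetric]) simp
  also have "{..<d} \<inter> {..<k} = {..<k}"
    using k by auto
  finally show ?thesis by (simp add: X_def Y_def sum_subtractf sum_distrib_left)
qed

lemma weighted_sum_le_curve:
  assumes w: "\<And>l. l < d \<Longrightarrow> 0 \<le> w l \<and> w l \<le> 1"
  shows "(\<Sum>l<d. w l * p l) \<le> curve (\<Sum>l<d. w l * g l)"
proof -
  define W where "W = (\<Sum>l<d. w l * g l)"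
  have "0 \<le> W" unfolding W_def using w g_pos by (auto intro!: sum_nonneg simp: less_imp_le)
  moreover have "W \<le> (\<Sum>l<d. g l)" unfolding W_def
    using w g_pos by (intro sum_mono) (simp add: mult_left_le_one_le less_imp_le)
  ultimately obtain k where k: "k < d" "curve W = tangent k W"
    using curve_on_some_segment g_sum by fastforce
  have "(\<Sum>l<d. w l * p l) = slope k * W + (\<Sum>l<d. w l * (p l - slope k * g l))"
    unfolding W_def by (simp add: sum_distrib_left sum.distrib[symmetric] algebra_simps)
  also have "\<dots> \<le> slope k * W + (\<Sum>l<d. max (p l - slope k * g l) 0)"
    using w by (intro add_left_mono sum_mono)
      (auto simp: mult_left_le_one_le mult_nonneg_nonpos max_def)
  also have "\<dots> = tangent k W"
    using sum_excess_over_slope[OF k(1)] by (simp add: tangent_def algebra_simps)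
  finally show ?thesis using k W_def by simp
qed

definition "prefix_tight x \<sigma> \<longleftrightarrow> (\<forall>m\<le>d. (\<Sum>i<m. x (\<sigma> i)) = curve (\<Sum>i<m. g (\<sigma> i)))"

end

section \<open>Transport matrices\<close>

definition clamp :: "real \<Rightarrow> real \<Rightarrow> real" where
  "clamp t len = max 0 (min t len)"

lemma clamp_mono: "a \<le> b \<Longrightarrow> clamp a len \<le> clamp b len"
  by (simp add: clamp_def)

text \<open>Cutting \<open>[0, 1]\<close> into consecutive intervals of lengths \<open>g (\<sigma> 0), g (\<sigma> 1), \<dots>\<close>,
  the interval of \<open>l\<close> starts at \<open>interval_start d g \<sigma> l\<close>.\<close>
definition interval_start :: "nat \<Rightarrow> (nat \<Rightarrow> real) \<Rightarrow> (nat \<Rightarrow> nat) \<Rightarrow> nat \<Rightarrow> real" where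
  "interval_start d g \<sigma> l = (\<Sum>k<inv_into {..<d} \<sigma> l. g (\<sigma> k))"

lemma interval_start_apply:
  "bij_betw \<sigma> {..<d} {..<d} \<Longrightarrow> m < d \<Longrightarrow> interval_start d g \<sigma> (\<sigma> m) = (\<Sum>k<m. g (\<sigma> k))"
  by (simp add: interval_start_def bij_betw_inv_into_left)

context thermo_curve
begin

lemma interval_start_bounds:
  assumes \<sigma>: "bij_betw \<sigma> {..<d} {..<d}" and i: "i < d"
  shows "0 \<le> interval_start d g \<sigma> i \<and> interval_start d g \<sigma> i + g i \<le> 1"
proof -
  obtain m where m: "m < d" "i = \<sigma> m" using \<sigma> i unfolding bij_betw_def by auto
  then show ?thesis
    using interval_start_apply[OF \<sigma> m(1), of g] prefix_sum_g_bounds[OF \<sigma>, of m "Suc m"] by simp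
qed

definition "cumul v t = (\<Sum>j<d. clamp (t - interval_start d g \<pi>\<^sub>p j) (g j) * (v j / g j))"

lemma cumul_on_segment:
  assumes k: "k < d" and t: "X k \<le> t" "t \<le> X (Suc k)"
  shows "cumul v t = (\<Sum>i<k. v (\<pi>\<^sub>p i)) + (t - X k) * (v (\<pi>\<^sub>p k) / g (\<pi>\<^sub>p k))"
proof -
  define h where "h m = clamp (t - X m) (g (\<pi>\<^sub>p m)) * (v (\<pi>\<^sub>p m) / g (\<pi>\<^sub>p m))" for m
  have "cumul v t = (\<Sum>m<d. h m)"
    unfolding cumul_def h_def
    using sum.reindex_bij_betw[OF bij_\<pi>\<^sub>p, of "\<lambda>j. clamp (t - interval_start d g \<pi>\<^sub>p j) (g j) * (v j / g j)"]
    by (simp add: interval_start_apply[OF bij_\<pi>\<^sub>p] X_def)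
  also have "\<dots> = (\<Sum>m<k. h m) + h k + (\<Sum>m\<in>{Suc k..<d}. h m)"
    using sum_lessThan_split[of "Suc k" d h] k by simp
  also have "(\<Sum>m<k. h m) = (\<Sum>i<k. v (\<pi>\<^sub>p i))"
  proof (rule sum.cong)
    fix m assume "m \<in> {..<k}"
    then have "X (Suc m) \<le> t" "m < d" using X_mono[of "Suc m" k] t k by auto
    then show "h m = v (\<pi>\<^sub>p m)" using g_\<pi>\<^sub>p_pos[of m] by (simp add: h_def clamp_def X_Suc)
  qed simp
  also have "h k = (t - X k) * (v (\<pi>\<^sub>p k) / g (\<pi>\<^sub>p k))"
    using t by (simp add: h_def clamp_def X_Suc)
  also have "(\<Sum>m\<in>{Suc k..<d}. h m) = 0"
  proof (rule sum.neutral, rule ballI)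
    fix m assume "m \<in> {Suc k..<d}"
    then have "t \<le> X m" using X_mono[of "Suc k" m] t by auto
    then show "h m = 0" by (simp add: h_def clamp_def)
  qed
  finally show ?thesis by simp
qed

lemma cumul_g: "0 \<le> t \<Longrightarrow> t \<le> 1 \<Longrightarrow> cumul g t = t"
  using curve_on_some_segment cumul_on_segment g_\<pi>\<^sub>p_pos by (fastforce simp: X_def)

lemma cumul_p: "0 \<le> t \<Longrightarrow> t \<le> 1 \<Longrightarrow> cumul p t = curve t"
  using curve_on_some_segment cumul_on_segment
  by (fastforce simp: Y_def tangent_def slope_def algebra_simps)

text \<open>\<open>transport \<sigma> i j * g j\<close> is the length of the overlap of the interval of \<open>i\<close> in the
  \<open>\<sigma>\<close>-layout with the interval of \<open>j\<close> in the \<open>\<pi>\<^sub>p\<close>-layout.\<close>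
definition "transport \<sigma> i j =
  (clamp (interval_start d g \<sigma> i + g i - interval_start d g \<pi>\<^sub>p j) (g j)
   - clamp (interval_start d g \<sigma> i - interval_start d g \<pi>\<^sub>p j) (g j)) / g j"

lemma transport_row:
  "(\<Sum>j<d. transport \<sigma> i j * v j)
     = cumul v (interval_start d g \<sigma> i + g i) - cumul v (interval_start d g \<sigma> i)"
  unfolding cumul_def transport_def
  by (simp add: sum_subtractf[symmetric] diff_divide_distrib algebra_simps)

lemma transport_col:
  assumes \<sigma>: "bij_betw \<sigma> {..<d} {..<d}" and j: "j < d"
  shows "(\<Sum>i<d. transport \<sigma> i j) = 1"
proof -
  define c where "c t = clamp (t - interval_start d g \<pi>\<^sub>p j) (g j)" for t
  define G where "G m = (\<Sum>k<m. g (\<sigma> k))" for m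
  have "(\<Sum>i<d. c (interval_start d g \<sigma> i + g i) - c (interval_start d g \<sigma> i))
      = (\<Sum>m<d. c (G (Suc m)) - c (G m))"
    using sum.reindex_bij_betw[OF \<sigma>, of "\<lambda>i. c (interval_start d g \<sigma> i + g i) - c (interval_start d g \<sigma> i)"]
    by (simp add: interval_start_apply[OF \<sigma>] G_def)
  also have "\<dots> = c (G d) - c 0"
    using sum_lessThan_telescope[of "\<lambda>m. c (G m)" d] by (simp add: G_def)
  also have "\<dots> = g j"
    using interval_start_bounds[OF bij_\<pi>\<^sub>p j] sum.reindex_bij_betw[OF \<sigma>, of g] g_sum g_pos[OF j]
    by (simp add: c_def G_def clamp_def)
  finally show ?thesis
    using g_pos[OF j] by (simp add: transport_def c_def sum_divide_distrib[symmetric])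
qed

lemma transport_TP: "bij_betw \<sigma> {..<d} {..<d} \<Longrightarrow> transport \<sigma> \<in> TP d g"
  unfolding TP_def
proof (intro CollectI conjI allI impI)
  fix i j assume "i < d" "j < d"
  then show "0 \<le> transport \<sigma> i j"
    unfolding transport_def using g_pos
    by (simp add: clamp_mono less_imp_le)
next
  fix i assume \<sigma>: "bij_betw \<sigma> {..<d} {..<d}" and i: "i < d"
  then show "(\<Sum>j<d. transport \<sigma> i j * g j) = g i"
    using transport_row[of \<sigma> i g] interval_start_bounds[OF \<sigma> i] g_pos[OF i]
      cumul_g[of "interval_start d g \<sigma> i"] cumul_g[of "interval_start d g \<sigma> i + g i"]
    by simp
qed (rule transport_col)

lemma prefix_tight_in_orbit:
  assumes \<sigma>: "bij_betw \<sigma> {..<d} {..<d}" and out: "\<forall>i\<ge>d. x i = 0" and x: "prefix_tight x \<sigma>"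
  shows "x \<in> TP_orbit d g p"
proof -
  have "mat_app d (transport \<sigma>) p l = x l" for l
  proof (cases "l < d")
    case True
    then obtain m where m: "m < d" "l = \<sigma> m" using \<sigma> unfolding bij_betw_def by auto
    have "mat_app d (transport \<sigma>) p l
        = cumul p (interval_start d g \<sigma> l + g l) - cumul p (interval_start d g \<sigma> l)"
      using True transport_row by (simp add: mat_app_def)
    also have "\<dots> = curve (\<Sum>i<Suc m. g (\<sigma> i)) - curve (\<Sum>i<m. g (\<sigma> i))"
      using cumul_p interval_start_bounds[OF \<sigma> True] g_pos[OF True] interval_start_apply[OF \<sigma> m(1)] m
      by simp
    also have "\<dots> = x l"
    proof -
      have "(\<Sum>i<Suc m. x (\<sigma> i)) = curve (\<Sum>i<Suc m. g (\<sigma> i))"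
        "(\<Sum>i<m. x (\<sigma> i)) = curve (\<Sum>i<m. g (\<sigma> i))"
        using x m by (simp_all add: prefix_tight_def del: sum.lessThan_Suc)
      with m show ?thesis by simp
    qed
    finally show ?thesis .
  qed (simp add: out mat_app_def)
  then have "x = mat_app d (transport \<sigma>) p" by auto
  with transport_TP[OF \<sigma>] show ?thesis unfolding TP_orbit_def by blast
qed

end

section \<open>Tight sets of the thermomajorization polytope\<close>

context thermo_curve
begin

definition "thermomajorized x \<longleftrightarrow> (\<forall>i\<ge>d. x i = 0) \<and> (\<Sum>i<d. x i) = 1 \<and>
   (\<forall>S\<subseteq>{..<d}. sum x S \<le> curve (sum g S))"

lemma thermomajorizedD: "thermomajorized x \<Longrightarrow> S \<subseteq> {..<d} \<Longrightarrow> sum x S \<le> curve (sum g S)"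
  by (simp add: thermomajorized_def)

lemma orbit_thermomajorized:
  assumes "x \<in> TP_orbit d g p"
  shows "thermomajorized x"
proof -
  obtain T where T: "T \<in> TP d g" "x = mat_app d T p"
    using assms unfolding TP_orbit_def by blast
  have nonneg: "\<And>i j. i < d \<Longrightarrow> j < d \<Longrightarrow> 0 \<le> T i j"
    and col: "\<And>j. j < d \<Longrightarrow> (\<Sum>i<d. T i j) = 1"
    and row: "\<And>i. i < d \<Longrightarrow> (\<Sum>j<d. T i j * g j) = g i"
    using T(1) unfolding TP_def by auto
  have sum_rows: "sum v S = (\<Sum>l<d. (\<Sum>i\<in>S. T i l) * w l)"
    if "S \<subseteq> {..<d}" "\<And>i. i < d \<Longrightarrow> v i = (\<Sum>l<d. T i l * w l)" for S v w
  proof -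
    have "sum v S = (\<Sum>i\<in>S. \<Sum>l<d. T i l * w l)"
      using that by (intro sum.cong) auto
    also have "\<dots> = (\<Sum>l<d. (\<Sum>i\<in>S. T i l) * w l)"
      by (subst sum.swap) (simp add: sum_distrib_right)
    finally show ?thesis .
  qed
  have "sum x S \<le> curve (sum g S)" if S: "S \<subseteq> {..<d}" for S
  proof -
    have "0 \<le> (\<Sum>i\<in>S. T i l) \<and> (\<Sum>i\<in>S. T i l) \<le> 1" if "l < d" for l
      using S nonneg col[OF that] that sum_mono2[of "{..<d}" S "\<lambda>i. T i l"]
      by (auto intro: sum_nonneg)
    then show ?thesis
      using weighted_sum_le_curve[of "\<lambda>l. \<Sum>i\<in>S. T i l"]
        sum_rows[OF S, of x p] sum_rows[OF S, of g g] T(2) row by (simp add: mat_app_def)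
  qed
  moreover have "(\<Sum>i<d. x i) = 1"
    using sum_rows[of "{..<d}" x p] T(2) col p_sum by (simp add: mat_app_def)
  ultimately show ?thesis
    using T(2) by (simp add: thermomajorized_def mat_app_def)
qed

definition "tight x S \<longleftrightarrow> sum x S = curve (sum g S)"

lemma curve_outer_le_inner:
  assumes "0 \<le> a" "a \<le> b" "a \<le> c" "b \<le> e" "c \<le> e" "e \<le> 1" and sum_eq: "e + a = b + c"
  shows "curve a + curve e \<le> curve b + curve c"
proof (cases "e = a")
  case False
  have "(e - b) * curve a + (b - a) * curve e \<le> (e - a) * curve b"
    "(e - c) * curve a + (c - a) * curve e \<le> (e - a) * curve c"
    using curve_concave[of a b e] curve_concave[of a c e] assms by simp_all
  moreover have "(b + c) * curve a = (e + a) * curve a" "(b + c) * curve e = (e + a) * curve e"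
    using sum_eq by simp_all
  ultimately have "(e - a) * (curve a + curve e) \<le> (e - a) * (curve b + curve c)"
    by (simp add: algebra_simps)
  with False assms show ?thesis by simp
next
  case True
  with assms have "b = a" "c = a" by linarith+
  with True show ?thesis by simp
qed

lemma tight_Un_Int:
  assumes x: "thermomajorized x" and A: "A \<subseteq> {..<d}" "tight x A" and B: "B \<subseteq> {..<d}" "tight x B"
  shows "tight x (A \<union> B) \<and> tight x (A \<inter> B)"
proof -
  have fin: "finite A" "finite B" using A B finite_subset by blast+
  have "curve (sum g (A \<inter> B)) + curve (sum g (A \<union> B)) \<le> curve (sum g A) + curve (sum g B)"
    using sum_g_bounds[of "A \<inter> B"] sum_g_bounds[of "A \<union> B"] A B sum.union_inter[OF fin, of g]
    by (intro curve_outer_le_inner) (auto intro!: sum_g_mono)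
  moreover have "sum x (A \<union> B) + sum x (A \<inter> B) = sum x A + sum x B"
    using sum.union_inter[OF fin] .
  moreover have "sum x (A \<union> B) \<le> curve (sum g (A \<union> B))" "sum x (A \<inter> B) \<le> curve (sum g (A \<inter> B))"
    using A B by (auto intro!: thermomajorizedD[OF x])
  ultimately show ?thesis
    using A B unfolding tight_def by linarith
qed

lemma tight_exchange:
  assumes x: "thermomajorized x" and T: "T \<subseteq> {..<d}" "tight x T"
    and j: "j \<in> T" and i: "i < d" "i \<notin> T" and ratio: "x j / g j \<le> x i / g i"
  shows "tight x (insert i (T - {j}))"
proof -
  have fin: "finite T" using T finite_subset by blast
  have gi: "0 < g i" and gj: "0 < g j" using g_pos i j T by auto
  define G where "G = sum g T"
  define s where "s = x i / g i"
  have xi: "x i = s * g i" using gi by (simp add: s_def)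
  have xj: "x j \<le> s * g j" using ratio gj by (simp add: s_def pos_divide_le_eq)
  have sets: "T - {j} \<subseteq> {..<d}" "insert i T \<subseteq> {..<d}" "insert i (T - {j}) \<subseteq> {..<d}"
    using T i by auto
  have sums: "sum g (T - {j}) = G - g j" "sum x (T - {j}) = sum x T - x j"
    "sum g (insert i T) = G + g i" "sum x (insert i T) = sum x T + x i"
    "sum g (insert i (T - {j})) = G - g j + g i" "sum x (insert i (T - {j})) = sum x T - x j + x i"
    using fin i j by (simp_all add: G_def sum_diff1)
  have xT: "sum x T = curve G" using T(2) by (simp add: tight_def G_def)
  have "curve (G - g j + g i) \<le> curve G + s * (g i - g j)"
    using curve_supergradient[of "G - g j" G "G + g i" "G - g j + g i" s]
      sum_g_bounds[OF sets(1)] sum_g_bounds[OF sets(2)] sum_g_bounds[OF sets(3)]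
      thermomajorizedD[OF x sets(1)] thermomajorizedD[OF x sets(2)] sums xT xi xj gi gj
    by (simp add: algebra_simps)
  also have "\<dots> \<le> sum x T - x j + x i"
    using xT xi xj by (simp add: algebra_simps)
  finally show ?thesis
    using thermomajorizedD[OF x sets(3)] unfolding tight_def sums(5,6) by linarith
qed

lemma tight_empty: "tight x {}"
  by (simp add: tight_def curve_0)

lemma tight_lessThan: "thermomajorized x \<Longrightarrow> tight x {..<d}"
  by (simp add: tight_def thermomajorized_def curve_1 g_sum)

definition "separating x \<longleftrightarrow>
  (\<forall>i<d. \<forall>j<d. i \<noteq> j \<longrightarrow> (\<exists>S\<subseteq>{..<d}. tight x S \<and> (i \<in> S \<longleftrightarrow> j \<notin> S)))"

lemma not_separatingE:
  assumes "\<not> separating x"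
  obtains i j where "i < d" "j < d" "i \<noteq> j"
    "\<And>S. S \<subseteq> {..<d} \<Longrightarrow> tight x S \<Longrightarrow> i \<in> S \<longleftrightarrow> j \<in> S"
proof -
  obtain i j where "i < d" "j < d" "i \<noteq> j"
    and "\<not> (\<exists>S\<subseteq>{..<d}. tight x S \<and> (i \<in> S \<longleftrightarrow> j \<notin> S))"
    using assms unfolding separating_def by blast
  then show thesis using that by blast
qed

lemma tight_superset_avoiding:
  assumes x: "thermomajorized x" "separating x" and P: "P \<subseteq> {..<d}"
    and upper: "\<And>i j. i \<in> P \<Longrightarrow> j < d \<Longrightarrow> j \<notin> P \<Longrightarrow> x j / g j \<le> x i / g i"
    and j: "j < d" "j \<notin> P"
  shows "\<exists>W\<subseteq>{..<d}. tight x W \<and> P \<subseteq> W \<and> j \<notin> W"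
proof -
  have "finite P" using P finite_subset by blast
  moreover have "Q \<subseteq> P \<Longrightarrow> \<exists>W\<subseteq>{..<d}. tight x W \<and> Q \<subseteq> W \<and> j \<notin> W"
    if "finite Q" for Q
    using that
  proof (induction Q rule: finite_induct)
    case empty
    then show ?case using tight_empty by blast
  next
    case (insert i Q)
    then obtain W where W: "W \<subseteq> {..<d}" "tight x W" "Q \<subseteq> W" "j \<notin> W" by blast
    have i: "i \<in> P" "i < d" "i \<noteq> j" using insert.prems P j by auto
    obtain S where S: "S \<subseteq> {..<d}" "tight x S" "i \<in> S \<longleftrightarrow> j \<notin> S"
      using x(2) i j unfolding separating_def by blast
    obtain S' where S': "S' \<subseteq> {..<d}" "tight x S'" "i \<in> S'" "j \<notin> S'"
    proof (cases "i \<in> S")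
      case False
      then have "tight x (insert i (S - {j}))"
        using tight_exchange[OF x(1) S(1,2) _ i(2)] upper[OF i(1) j] S(3) by simp
      then show ?thesis
        using S(1) i by (intro that[of "insert i (S - {j})"]) auto
    qed (use that S in blast)
    then show ?case
      using tight_Un_Int[OF x(1) W(1,2) S'(1,2)] W by (intro exI[of _ "W \<union> S'"]) auto
  qed
  ultimately show ?thesis by auto
qed

lemma tight_upper_set:
  assumes x: "thermomajorized x" "separating x" and P: "P \<subseteq> {..<d}"
    and upper: "\<And>i j. i \<in> P \<Longrightarrow> j < d \<Longrightarrow> j \<notin> P \<Longrightarrow> x j / g j \<le> x i / g i"
  shows "tight x P"
proof -
  have avoid: "Q \<subseteq> {..<d} - P \<Longrightarrow> \<exists>W\<subseteq>{..<d}. tight x W \<and> P \<subseteq> W \<and> W \<inter> Q = {}"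
    if "finite Q" for Q
    using that
  proof (induction Q rule: finite_induct)
    case empty
    then show ?case using tight_lessThan[OF x(1)] P by blast
  next
    case (insert j Q)
    then obtain W where W: "W \<subseteq> {..<d}" "tight x W" "P \<subseteq> W" "W \<inter> Q = {}" by blast
    obtain W' where W': "W' \<subseteq> {..<d}" "tight x W'" "P \<subseteq> W'" "j \<notin> W'"
      using tight_superset_avoiding[OF x P upper] insert.prems by blast
    then show ?case
      using tight_Un_Int[OF x(1) W(1,2) W'(1,2)] W by (intro exI[of _ "W \<inter> W'"]) auto
  qed
  obtain W where "W \<subseteq> {..<d}" "tight x W" "P \<subseteq> W" "W \<inter> ({..<d} - P) = {}"
    using avoid[of "{..<d} - P"] by blast
  moreover from this have "W = P" by blast
  ultimately show ?thesis by simp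
qed

lemma prefix_tight_if_separating:
  assumes x: "thermomajorized x" "separating x" and \<pi>: "beta_order d g x \<pi>"
  shows "prefix_tight x \<pi>"
  unfolding prefix_tight_def
proof (intro allI impI)
  fix m assume m: "m \<le> d"
  have bij: "bij_betw \<pi> {..<d} {..<d}" using beta_order_bij[OF \<pi>] .
  have "tight x (\<pi> ` {..<m})"
  proof (rule tight_upper_set[OF x bij_betw_prefix_subset[OF bij m]])
    fix i j assume i: "i \<in> \<pi> ` {..<m}" and j: "j < d" "j \<notin> \<pi> ` {..<m}"
    obtain a where a: "a < m" "i = \<pi> a" using i by blast
    obtain c where c: "c < d" "j = \<pi> c"
      using j bij unfolding bij_betw_def by auto
    have "a \<le> c"
    proof (rule ccontr)
      assume "\<not> a \<le> c"
      then have "j \<in> \<pi> ` {..<m}" using a c by auto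
      with j show False by simp
    qed
    then show "x j / g j \<le> x i / g i"
      using beta_order_ratio_antimono[OF \<pi> _ c(1)] a c by simp
  qed
  then show "(\<Sum>i<m. x (\<pi> i)) = curve (\<Sum>i<m. g (\<pi> i))"
    unfolding tight_def using sum_bij_betw_prefix[OF bij m, of x] sum_bij_betw_prefix[OF bij m, of g]
    by simp
qed

end

section \<open>The orbit fills the thermomajorization polytope\<close>

definition shift_mass :: "(nat \<Rightarrow> real) \<Rightarrow> nat \<Rightarrow> nat \<Rightarrow> real \<Rightarrow> nat \<Rightarrow> real" where
  "shift_mass x i j t = (\<lambda>l. x l + (if l = i then t else 0) - (if l = j then t else 0))"

lemma sum_shift_mass:
  assumes "finite S"
  shows "sum (shift_mass x i j t) S = sum x S + (if i \<in> S then t else 0) - (if j \<in> S then t else 0)"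
  using sum.delta[OF assms, of i "\<lambda>_. t"] sum.delta[OF assms, of j "\<lambda>_. t"]
  by (simp add: shift_mass_def sum.distrib sum_subtractf)

context thermo_curve
begin

definition "num_slack x = card {S. S \<subseteq> {..<d} \<and> \<not> tight x S}"

lemma num_slack_less:
  assumes "\<And>S. S \<subseteq> {..<d} \<Longrightarrow> tight x S \<Longrightarrow> tight y S"
    and "S\<^sub>0 \<subseteq> {..<d}" "\<not> tight x S\<^sub>0" "tight y S\<^sub>0"
  shows "num_slack y < num_slack x"
proof -
  have "{S. S \<subseteq> {..<d} \<and> \<not> tight y S} \<subset> {S. S \<subseteq> {..<d} \<and> \<not> tight x S}"
    using assms by blast
  moreover have "finite {S. S \<subseteq> {..<d} \<and> \<not> tight x S}"
    by (rule finite_subset[of _ "Pow {..<d}"]) auto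
  ultimately show ?thesis
    unfolding num_slack_def by (simp add: psubset_card_mono)
qed

lemma thermomajorized_shift_mass:
  assumes x: "thermomajorized x" and ij: "i < d" "j < d" and t: "0 \<le> t"
    and room: "\<And>S. S \<subseteq> {..<d} \<Longrightarrow> i \<in> S \<Longrightarrow> j \<notin> S \<Longrightarrow> sum x S + t \<le> curve (sum g S)"
  shows "thermomajorized (shift_mass x i j t)"
proof -
  have "sum (shift_mass x i j t) S \<le> curve (sum g S)" if S: "S \<subseteq> {..<d}" for S
    using sum_shift_mass[OF finite_subset[OF S], of x i j t] thermomajorizedD[OF x S] room[OF S] t
    by (cases "i \<in> S"; cases "j \<in> S") auto
  moreover have "(\<Sum>l<d. shift_mass x i j t l) = 1"
    using sum_shift_mass[of "{..<d}" x i j t] x ij by (simp add: thermomajorized_def)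
  ultimately show ?thesis
    using x ij by (auto simp: thermomajorized_def shift_mass_def)
qed

text \<open>If no tight set separates \<open>i\<close> from \<open>j\<close>, mass can be moved from \<open>j\<close> to \<open>i\<close> until the
  first set containing \<open>i\<close> but not \<open>j\<close> becomes tight; tight sets stay tight.\<close>
lemma shift_mass_reduces_slack:
  assumes x: "thermomajorized x" and ij: "i < d" "j < d" "i \<noteq> j"
    and unsep: "\<And>S. S \<subseteq> {..<d} \<Longrightarrow> tight x S \<Longrightarrow> i \<in> S \<longleftrightarrow> j \<in> S"
  shows "\<exists>t>0. thermomajorized (shift_mass x i j t) \<and> num_slack (shift_mass x i j t) < num_slack x"
proof -
  define fam where "fam = {S. S \<subseteq> {..<d} \<and> i \<in> S \<and> j \<notin> S}"
  define slack where "slack S = curve (sum g S) - sum x S" for S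
  define t where "t = Min (slack ` fam)"
  have fin: "finite fam" unfolding fam_def by (rule finite_subset[of _ "Pow {..<d}"]) auto
  have "{i} \<in> fam" using ij unfolding fam_def by auto
  then have "t \<in> slack ` fam"
    unfolding t_def using fin by (intro Min_in) auto
  then obtain S\<^sub>0 where S\<^sub>0: "S\<^sub>0 \<in> fam" "slack S\<^sub>0 = t" by blast
  have t_le: "t \<le> slack S" if "S \<in> fam" for S
    using fin that unfolding t_def by simp
  have slack_pos: "0 < slack S \<and> \<not> tight x S" if "S \<in> fam" for S
    using that unsep thermomajorizedD[OF x] unfolding fam_def slack_def tight_def
    by (metis (mono_tags, lifting) diff_gt_0_iff_gt mem_Collect_eq order_less_le)
  have t: "0 < t" using slack_pos[OF S\<^sub>0(1)] S\<^sub>0(2) by simp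
  define y where "y = shift_mass x i j t"
  have sum_y: "sum y S = sum x S + (if i \<in> S then t else 0) - (if j \<in> S then t else 0)"
    if "S \<subseteq> {..<d}" for S
    unfolding y_def using sum_shift_mass finite_subset[OF that] by blast
  have "sum x S + t \<le> curve (sum g S)" if "S \<subseteq> {..<d}" "i \<in> S" "j \<notin> S" for S
    using t_le[of S] that by (simp add: fam_def slack_def)
  then have "thermomajorized y"
    unfolding y_def using thermomajorized_shift_mass[OF x ij(1,2)] t by simp
  moreover have "num_slack y < num_slack x"
  proof (rule num_slack_less)
    show "tight y S" if "S \<subseteq> {..<d}" "tight x S" for S
      using sum_y[OF that(1)] unsep[OF that] that(2) by (auto simp: tight_def)
    show "S\<^sub>0 \<subseteq> {..<d}" "\<not> tight x S\<^sub>0" using S\<^sub>0(1) slack_pos by (auto simp: fam_def)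
    show "tight y S\<^sub>0"
      using sum_y[of S\<^sub>0] S\<^sub>0 by (auto simp: fam_def slack_def tight_def)
  qed
  ultimately show ?thesis using t unfolding y_def by blast
qed

lemma split_unseparated:
  assumes x: "thermomajorized x" and ij: "i < d" "j < d" "i \<noteq> j"
    and unsep: "\<And>S. S \<subseteq> {..<d} \<Longrightarrow> tight x S \<Longrightarrow> i \<in> S \<longleftrightarrow> j \<in> S"
  shows "\<exists>y z u. thermomajorized y \<and> thermomajorized z \<and> y \<noteq> z \<and> 0 < u \<and> u < 1 \<and>
    x = (\<lambda>l. (1 - u) * y l + u * z l) \<and> num_slack y < num_slack x \<and> num_slack z < num_slack x"
proof -
  obtain t where t: "0 < t" "thermomajorized (shift_mass x i j t)" "num_slack (shift_mass x i j t) < num_slack x"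
    using shift_mass_reduces_slack[OF x ij unsep] by blast
  obtain s where s: "0 < s" "thermomajorized (shift_mass x j i s)" "num_slack (shift_mass x j i s) < num_slack x"
    using shift_mass_reduces_slack[OF x ij(2,1) ij(3)[symmetric]] unsep by blast
  define u where "u = t / (s + t)"
  have u: "0 < u" "u < 1" "1 - u = s / (s + t)"
    using t(1) s(1) unfolding u_def by (auto simp: field_simps)
  have "shift_mass x i j t \<noteq> shift_mass x j i s"
  proof
    assume "shift_mass x i j t = shift_mass x j i s"
    then have "shift_mass x i j t i = shift_mass x j i s i" by simp
    with ij(3) t(1) s(1) show False unfolding shift_mass_def by simp
  qed
  moreover have "x = (\<lambda>l. (1 - u) * shift_mass x i j t l + u * shift_mass x j i s l)"
  proof
    fix l
    have "(1 - u) * shift_mass x i j t l + u * shift_mass x j i s l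
        = (s * shift_mass x i j t l + t * shift_mass x j i s l) / (s + t)"
      unfolding u(3) by (simp add: u_def add_divide_distrib)
    also have "s * shift_mass x i j t l + t * shift_mass x j i s l = (s + t) * x l"
      unfolding shift_mass_def by (cases "l = i"; cases "l = j") (auto simp: algebra_simps)
    finally show "x l = (1 - u) * shift_mass x i j t l + u * shift_mass x j i s l"
      using t(1) s(1) by simp
  qed
  ultimately show ?thesis
    using t s u by (intro exI[of _ "shift_mass x i j t"] exI[of _ "shift_mass x j i s"] exI[of _ u]) simp
qed

lemma thermomajorized_in_orbit: "thermomajorized x \<Longrightarrow> x \<in> TP_orbit d g p"
proof (induction "num_slack x" arbitrary: x rule: less_induct)
  case (less x)
  show ?case
  proof (cases "separating x")
    case True
    obtain \<pi> where \<pi>: "beta_order d g x \<pi>" using beta_order_exists by blast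
    show ?thesis
      using prefix_tight_in_orbit[OF beta_order_bij[OF \<pi>]] prefix_tight_if_separating[OF less.prems True \<pi>]
        less.prems by (simp add: thermomajorized_def)
  next
    case False
    then show ?thesis
    proof (rule not_separatingE)
      fix i j assume ij: "i < d" "j < d" "i \<noteq> j"
        and unsep: "\<And>S. S \<subseteq> {..<d} \<Longrightarrow> tight x S \<Longrightarrow> i \<in> S \<longleftrightarrow> j \<in> S"
      obtain y z u where "thermomajorized y" "thermomajorized z" "0 < u" "u < 1"
        "x = (\<lambda>l. (1 - u) * y l + u * z l)" "num_slack y < num_slack x" "num_slack z < num_slack x"
        using split_unseparated[OF less.prems ij unsep] by blast
      with less.hyps show ?thesis using TP_orbit_convex[of y d g p z u] by simp
    qed
  qed
qed

end

section \<open>Extreme points\<close>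

context thermo_curve
begin

lemma prefix_tight_iff_tight:
  assumes "bij_betw \<sigma> {..<d} {..<d}"
  shows "prefix_tight x \<sigma> \<longleftrightarrow> (\<forall>m\<le>d. tight x (\<sigma> ` {..<m}))"
  unfolding prefix_tight_def tight_def by (auto simp: sum_bij_betw_prefix[OF assms])

lemma tight_convex_comb:
  assumes a: "thermomajorized a" and c: "thermomajorized c" and u: "0 < u" "u < 1" and S: "S \<subseteq> {..<d}"
    and tight: "tight (\<lambda>l. (1 - u) * a l + u * c l) S"
  shows "tight a S \<and> tight c S"
proof -
  define F where "F = curve (sum g S)"
  have comb: "(1 - u) * sum a S + u * sum c S = F"
    using tight by (simp add: tight_def F_def sum.distrib sum_distrib_left)
  have "(1 - u) * sum a S \<le> (1 - u) * F" "u * sum c S \<le> u * F"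
    using thermomajorizedD[OF a S] thermomajorizedD[OF c S] u by (simp_all add: F_def)
  moreover have "(1 - u) * F + u * F = F" by (simp add: algebra_simps)
  ultimately have "(1 - u) * sum a S = (1 - u) * F" "u * sum c S = u * F"
    using comb by linarith+
  with u show ?thesis by (simp add: tight_def F_def)
qed

lemma prefix_tight_extreme_point:
  assumes \<sigma>: "bij_betw \<sigma> {..<d} {..<d}" and out: "\<forall>i\<ge>d. r i = 0" and r: "prefix_tight r \<sigma>"
  shows "is_extreme_point r (TP_orbit d g p)"
  unfolding is_extreme_point_def
proof (intro conjI notI)
  show "r \<in> TP_orbit d g p"
    using prefix_tight_in_orbit[OF \<sigma> out r] .
next
  assume "\<exists>a\<in>TP_orbit d g p. \<exists>c\<in>TP_orbit d g p. a \<noteq> c \<and>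
    (\<exists>u. 0 < u \<and> u < 1 \<and> r = (\<lambda>i. (1 - u) * a i + u * c i))"
  then obtain a c u where ac: "a \<in> TP_orbit d g p" "c \<in> TP_orbit d g p" "a \<noteq> c"
    and u: "0 < u" "u < 1" and r_eq: "r = (\<lambda>i. (1 - u) * a i + u * c i)"
    by blast
  have maj: "thermomajorized a" "thermomajorized c" using orbit_thermomajorized ac by auto
  then have "prefix_tight a \<sigma> \<and> prefix_tight c \<sigma>"
    using r tight_convex_comb[OF maj u] bij_betw_prefix_subset[OF \<sigma>]
    unfolding prefix_tight_iff_tight[OF \<sigma>] r_eq by blast
  then have "a = c"
    using eq_if_prefix_sums_eq[OF \<sigma>] maj by (simp add: prefix_tight_def thermomajorized_def)
  with ac show False by simp
qed

lemma extreme_point_separating: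
  assumes ext: "is_extreme_point r (TP_orbit d g p)"
  shows "separating r"
proof (rule ccontr)
  have r: "thermomajorized r" using ext orbit_thermomajorized unfolding is_extreme_point_def by blast
  assume "\<not> separating r"
  then show False
  proof (rule not_separatingE)
    fix i j assume ij: "i < d" "j < d" "i \<noteq> j"
      and unsep: "\<And>S. S \<subseteq> {..<d} \<Longrightarrow> tight r S \<Longrightarrow> i \<in> S \<longleftrightarrow> j \<in> S"
    obtain y z u where "thermomajorized y" "thermomajorized z" "y \<noteq> z" "0 < u" "u < 1"
      "r = (\<lambda>l. (1 - u) * y l + u * z l)"
      using split_unseparated[OF r ij unsep] by blast
    with ext thermomajorized_in_orbit show False
      unfolding is_extreme_point_def by blast
  qed
qed

theorem extreme_point_iff_prefix_tight:
  assumes out: "\<forall>i\<ge>d. r i = 0"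
  shows "is_extreme_point r (TP_orbit d g p) \<longleftrightarrow> (\<forall>\<pi>. beta_order d g r \<pi> \<longrightarrow> prefix_tight r \<pi>)"
proof
  assume ext: "is_extreme_point r (TP_orbit d g p)"
  then have "thermomajorized r" using orbit_thermomajorized unfolding is_extreme_point_def by blast
  with extreme_point_separating[OF ext] show "\<forall>\<pi>. beta_order d g r \<pi> \<longrightarrow> prefix_tight r \<pi>"
    using prefix_tight_if_separating by blast
next
  assume "\<forall>\<pi>. beta_order d g r \<pi> \<longrightarrow> prefix_tight r \<pi>"
  moreover obtain \<pi> where "beta_order d g r \<pi>" using beta_order_exists by blast
  ultimately show "is_extreme_point r (TP_orbit d g p)"
    using prefix_tight_extreme_point[OF beta_order_bij out] by blast
qed

lemma elbows_on_curve_iff_prefix_tight: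
  assumes \<sigma>: "bij_betw \<sigma> {..<d} {..<d}" and r: "(\<Sum>i<d. r i) = 1"
  shows "(\<forall>k. k + 2 \<le> d \<longrightarrow> elbow_y r \<sigma> k = curve (elbow_x g \<sigma> k)) \<longleftrightarrow> prefix_tight r \<sigma>"
proof -
  have elbow: "elbow_y r \<sigma> k = (\<Sum>i<Suc k. r (\<sigma> i))" "elbow_x g \<sigma> k = (\<Sum>i<Suc k. g (\<sigma> i))" for k
    by (simp_all add: elbow_y_def elbow_x_def lessThan_Suc_atMost)
  have ends: "(\<Sum>i<m. r (\<sigma> i)) = curve (\<Sum>i<m. g (\<sigma> i))" if "m = 0 \<or> m = d" for m
    using that curve_0 curve_1 r g_sum sum.reindex_bij_betw[OF \<sigma>, of r] sum.reindex_bij_betw[OF \<sigma>, of g]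
    by auto
  show ?thesis
    unfolding prefix_tight_def elbow
  proof (intro iffI allI impI)
    fix m assume elbows: "\<forall>k. k + 2 \<le> d \<longrightarrow> (\<Sum>i<Suc k. r (\<sigma> i)) = curve (\<Sum>i<Suc k. g (\<sigma> i))"
      and m: "m \<le> d"
    show "(\<Sum>i<m. r (\<sigma> i)) = curve (\<Sum>i<m. g (\<sigma> i))"
    proof (cases "m = 0 \<or> m = d")
      case False
      then obtain k where "m = Suc k" "k + 2 \<le> d" using m by (cases m) auto
      then show ?thesis using elbows by simp
    qed (rule ends)
  next
    fix k assume "\<forall>m\<le>d. (\<Sum>i<m. r (\<sigma> i)) = curve (\<Sum>i<m. g (\<sigma> i))" "k + 2 \<le> d"
    then show "(\<Sum>i<Suc k. r (\<sigma> i)) = curve (\<Sum>i<Suc k. g (\<sigma> i))"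
      by (simp del: sum.lessThan_Suc)
  qed
qed

lemma tightly_thermomajorizes_iff_prefix_tight:
  "(\<Sum>i<d. r i) = 1 \<Longrightarrow>
    tightly_thermomajorizes d g p r \<longleftrightarrow> (\<forall>\<pi>. beta_order d g r \<pi> \<longrightarrow> prefix_tight r \<pi>)"
  unfolding tightly_thermomajorizes_def
  using elbows_on_curve_iff_prefix_tight[OF beta_order_bij] by blast

end

lemma partfun_pos: "0 < d \<Longrightarrow> 0 < partfun d \<beta> E"
  unfolding partfun_def qfac_def by (intro sum_pos) auto

lemma gibbs_pos: "i < d \<Longrightarrow> 0 < gibbs d \<beta> E i"
  using partfun_pos[of d \<beta> E] by (simp add: gibbs_def qfac_def)

lemma gibbs_sum: "0 < d \<Longrightarrow> (\<Sum>i<d. gibbs d \<beta> E i) = 1"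
  using partfun_pos[of d \<beta> E] by (simp add: gibbs_def partfun_def sum_divide_distrib[symmetric])

text \<open>Only \<open>0 < d\<close> and the positivity and normalisation of the Gibbs vector enter the proof.\<close>
theorem mainTheorem2:
  fixes d :: nat and \<beta> :: real and E :: "nat \<Rightarrow> real" and p r :: "nat \<Rightarrow> real"
  assumes "d \<ge> 2" and "0 < \<beta>"
    and "E 0 = 0" and "inj_on E {..<d}"
    and "is_state d p" and "is_state d r"
  shows "is_extreme_point r (TP_orbit d (gibbs d \<beta> E) p)
     \<longleftrightarrow> tightly_thermomajorizes d (gibbs d \<beta> E) p r"
proof -
  interpret thermo_curve d "gibbs d \<beta> E" p
    using assms(1,5) gibbs_pos gibbs_sum by unfold_locales (auto simp: is_state_def)
  show ?thesis
    using assms(6) extreme_point_iff_prefix_tight tightly_thermomajorizes_iff_prefix_tight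
    by (simp add: is_state_def)
qed

end
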